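(* Let $\mathcal{X}$ be a set and $\mathcal{H}\subseteq\{0,1\}^{\mathcal{X}}$. Player $\mathrm{P_A}$ has a winning strategy in the Gale–Stewart game $\mathfrak{G}$ if and only if $\mathcal{H}$ has an infinite Littlestone tree.
   Context: For $x_1,\ldots,x_t\in\mathcal{X}$ and $y_1,\ldots,y_t\in\{0,1\}$, let $\mathcal{H}_{x_1,y_1,\ldots,x_t,y_t}=\{h\in\mathcal{H}:h(x_s)=y_s,\ s\le t\}$. The game $\mathfrak{G}$ has two players $\mathrm{P_A}$ and $\mathrm{P_L}$; in each round $\tau\ge1$, $\mathrm{P_A}$ chooses $\xi_\tau\in\mathcal{X}$, then $\mathrm{P_L}$ chooses $\eta_\tau\in\{0,1\}$. $\mathrm{P_L}$ wins if $\mathcal{H}_{\xi_1,\eta_1,\ldots,\xi_\tau,\eta_\tau}=\varnothing$ for some finite $\tau$; otherwise $\mathrm{P_A}$ wins. A strategy for a player is a sequence of functions giving that player's move in round $\tau$ as a function of all previous moves (and, for $\mathrm{P_L}$, the current move $\xi_\tau$); it is winning if it wins against every play of the opponent. Littlestone tree of depth $d\le\infty$: a collection $\{x_{\mathbf u}:0\le k<d,\ \mathbf u\in\{0,1\}^k\}\subseteq\mathcal{X}$ such that for every $\mathbf y\in\{0,1\}^d$ and $n<d$ there is $h\in\mathcal{H}$ with $h(x_{\mathbf y_{\le k}})=y_{k+1}$ for $0\le k\le n$, $\mathbf y_{\le k}=(y_1,\ldots,y_k)$. Infinite: $d=\infty$. *)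

theory Defs
  imports Main
begin

text \<open>Hypotheses are functions 'x => bool (label 1 = True, 0 = False).
  A history of the game is a list of pairs (xi_s, eta_s) of moves made so far.\<close>

definition consistent :: "('x \<Rightarrow> bool) set \<Rightarrow> ('x \<times> bool) list \<Rightarrow> ('x \<Rightarrow> bool) set" where
  "consistent H hs = {h \<in> H. \<forall>(x, y) \<in> set hs. h x = y}"

fun play_hist :: "(('x \<times> bool) list \<Rightarrow> 'x) \<Rightarrow> (nat \<Rightarrow> bool) \<Rightarrow> nat \<Rightarrow> ('x \<times> bool) list" where
  "play_hist sA eta 0 = []"
| "play_hist sA eta (Suc n) = play_hist sA eta n @ [(sA (play_hist sA eta n), eta n)]"

definition PA_winning :: "('x \<Rightarrow> bool) set \<Rightarrow> (('x \<times> bool) list \<Rightarrow> 'x) \<Rightarrow> bool" where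
  "PA_winning H sA \<longleftrightarrow> (\<forall>eta n. consistent H (play_hist sA eta n) \<noteq> {})"

text \<open>Infinite Littlestone tree: nodes indexed by finite 0/1 strings u (bool lists).
  A branch y : nat => bool has y_{k+1} = y k, so y_{<=k} = map y [0..<k].\<close>

definition infinite_littlestone_tree :: "('x \<Rightarrow> bool) set \<Rightarrow> (bool list \<Rightarrow> 'x) \<Rightarrow> bool" where
  "infinite_littlestone_tree H t \<longleftrightarrow>
     (\<forall>y :: nat \<Rightarrow> bool. \<forall>n. \<exists>h \<in> H. \<forall>k \<le> n. h (t (map y [0..<k])) = y k)"

end

theory Submission
  imports Defs
begin

text \<open>Against a fixed strategy of \<open>P_A\<close> a play is determined by the answers of \<open>P_L\<close>.
  Labelling the node \<open>u\<close> of the binary tree with the move of \<open>P_A\<close> after the answers \<open>u\<close>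
  therefore turns a strategy into a tree whose branch along \<open>y\<close> is the play against \<open>y\<close>;
  the tree is Littlestone exactly when no finite stage of such a play leaves the class
  empty. Conversely, a Littlestone tree is played by moving to the node addressed by the
  answers of \<open>P_L\<close> so far.\<close>

lemma play_hist_cong:
  assumes "\<And>i. i < n \<Longrightarrow> eta i = eta' i"
  shows "play_hist sA eta n = play_hist sA eta' n"
  using assms by (induction n) auto

lemma set_play_hist:
  "set (play_hist sA eta n) = {(sA (play_hist sA eta k), eta k) | k. k < n}"
  by (induction n) (auto simp: less_Suc_eq)

lemma map_snd_play_hist: "map snd (play_hist sA eta n) = map eta [0..<n]"
  by (induction n) auto

lemma mem_consistent_play_hist_iff:
  "h \<in> consistent H (play_hist sA eta n) \<longleftrightarrow>
     h \<in> H \<and> (\<forall>k<n. h (sA (play_hist sA eta k)) = eta k)"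
  unfolding consistent_def set_play_hist by blast

lemma infinite_littlestone_tree_of_PA_winning:
  assumes "PA_winning H sA"
  shows "infinite_littlestone_tree H (\<lambda>u. sA (play_hist sA ((!) u) (length u)))"
  unfolding infinite_littlestone_tree_def
proof (intro allI)
  fix y :: "nat \<Rightarrow> bool" and n
  from assms obtain h where h: "h \<in> consistent H (play_hist sA y (Suc n))"
    unfolding PA_winning_def by blast
  have node: "play_hist sA ((!) (map y [0..<k])) k = play_hist sA y k" for k
    by (rule play_hist_cong) simp
  from h have "h \<in> H" and "\<forall>k<Suc n. h (sA (play_hist sA y k)) = y k"
    unfolding mem_consistent_play_hist_iff by blast+
  then show "\<exists>h\<in>H. \<forall>k\<le>n.
      h (sA (play_hist sA ((!) (map y [0..<k])) (length (map y [0..<k])))) = y k"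
    by (auto simp: node less_Suc_eq_le)
qed

lemma PA_winning_of_infinite_littlestone_tree:
  assumes "infinite_littlestone_tree H t"
  shows "PA_winning H (t \<circ> map snd)"
  unfolding PA_winning_def
proof (intro allI)
  fix eta :: "nat \<Rightarrow> bool" and n
  from assms obtain h where "h \<in> H" and h: "\<forall>k\<le>n. h (t (map eta [0..<k])) = eta k"
    unfolding infinite_littlestone_tree_def by blast
  then have "h \<in> consistent H (play_hist (t \<circ> map snd) eta n)"
    unfolding mem_consistent_play_hist_iff by (simp add: map_snd_play_hist)
  then show "consistent H (play_hist (t \<circ> map snd) eta n) \<noteq> {}" by blast
qed

theorem mainTheorem4:
  fixes H :: "('x \<Rightarrow> bool) set"
  shows "(\<exists>sA. PA_winning H sA) \<longleftrightarrow> (\<exists>t. infinite_littlestone_tree H t)"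
  using infinite_littlestone_tree_of_PA_winning PA_winning_of_infinite_littlestone_tree
  by blast

end
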